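(* The function $Q:Z_0\to\mathbb{R}$, $Q(z)=\lambda_{\max}(M(z))$, is convex.
   Context: Let $n\ge2$, $\mathcal S_0^{n\times n}$ the trace-free symmetric matrices, $Z:=\mathbb{R}\times\mathbb{R}^n\times\mathbb{R}^n\times\mathcal S_0^{n\times n}\times\mathbb{R}$ with elements $z=(\rho,v,m,\sigma,p)$, $Z_0:=\{z\in Z:\rho\in(-1,1)\}$ (a convex set). For $z\in Z_0$, $M(z):=\frac{v\otimes v-\rho(m\otimes v+v\otimes m)+m\otimes m}{1-\rho^2}-\sigma$ and $\lambda_{\max}$ denotes the maximal eigenvalue of a symmetric matrix. *)

theory Defs
  imports "HOL-Analysis.Analysis"
begin

definition outer :: "real^'n \<Rightarrow> real^'n \<Rightarrow> real^'n^'n" where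
  "outer v w = (\<chi> i j. v $ i * w $ j)"

definition symmetric_mat :: "real^'n^'n \<Rightarrow> bool" where
  "symmetric_mat A \<longleftrightarrow> transpose A = A"

definition trace_free :: "real^('n::finite)^'n \<Rightarrow> bool" where
  "trace_free A \<longleftrightarrow> (\<Sum>i\<in>UNIV. A $ i $ i) = 0"

definition eigenvalues :: "real^'n^'n \<Rightarrow> real set" where
  "eigenvalues A = {l. \<exists>x. x \<noteq> 0 \<and> A *v x = l *\<^sub>R x}"

definition lambda_max :: "real^'n^'n \<Rightarrow> real" where
  "lambda_max A = Max (eigenvalues A)"

text \<open>The space Z = R x R^n x R^n x S_0^{n x n} x R, realised inside the ambient
  real vector space R x R^n x R^n x R^{n x n} x R, and the convex subset Z_0.\<close>
type_synonym 'n zspace = "real \<times> (real^'n) \<times> (real^'n) \<times> (real^'n^'n) \<times> real"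

definition Z0 :: "('n::finite) zspace set" where
  "Z0 = {(\<rho>, v, m, \<sigma>, p). -1 < \<rho> \<and> \<rho> < 1 \<and> symmetric_mat \<sigma> \<and> trace_free \<sigma>}"

definition Mmat :: "('n::finite) zspace \<Rightarrow> real^'n^'n" where
  "Mmat z = (case z of (\<rho>, v, m, \<sigma>, p) \<Rightarrow>
     (1 / (1 - \<rho>^2)) *\<^sub>R (outer v v - \<rho> *\<^sub>R (outer m v + outer v m) + outer m m) - \<sigma>)"

definition Qfun :: "('n::finite) zspace \<Rightarrow> real" where
  "Qfun z = lambda_max (Mmat z)"

end

theory Submission
  imports Defs
begin

text \<open>For a symmetric matrix \<open>A\<close>, \<open>\<lambda>\<^sub>m\<^sub>a\<^sub>x(A)\<close> is the maximum of the Rayleigh quotient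
  \<open>x \<bullet> A x / x \<bullet> x\<close>, so \<open>z \<mapsto> \<lambda>\<^sub>m\<^sub>a\<^sub>x(M z)\<close> is a pointwise supremum of the functions
  \<open>z \<mapsto> x \<bullet> M(z) x / x \<bullet> x\<close> and is convex as soon as each of these is. Writing \<open>a = v \<bullet> x\<close>,
  \<open>b = m \<bullet> x\<close>, one has \<open>x \<bullet> M(z) x = (a\<^sup>2 - 2\<rho>ab + b\<^sup>2)/(1 - \<rho>\<^sup>2) - x \<bullet> \<sigma> x\<close>. The last term is
  linear in \<open>z\<close>, and the first equals \<open>(a + b)\<^sup>2/(2(1 + \<rho>)) + (a - b)\<^sup>2/(2(1 - \<rho>))\<close>, a sum of two
  quadratic-over-linear functions \<open>c\<^sup>2/y\<close>, which are jointly convex on \<open>y > 0\<close>.\<close>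

lemma inner_matrix_vector_symmetric:
  assumes "symmetric_mat A"
  shows "x \<bullet> (A *v y) = y \<bullet> (A *v x)"
  by (metis assms symmetric_mat_def dot_lmul_matrix inner_commute transpose_matrix_vector)

lemma linear_coeff_eq_0_if_nonneg_quadratic:
  fixes a b :: real
  assumes "\<And>t. 0 \<le> a * t + b * t\<^sup>2"
  shows "a = 0"
proof (rule ccontr)
  assume "a \<noteq> 0"
  define s where "s = \<bar>b\<bar> + 1"
  have "s > 0" "b - s < 0" by (auto simp: s_def)
  have "a * (- a / s) + b * (- a / s)\<^sup>2 = a\<^sup>2 * (b - s) / s\<^sup>2"
    using \<open>s > 0\<close> by (simp add: field_simps power2_eq_square)
  also have "\<dots> < 0"
    using \<open>a \<noteq> 0\<close> \<open>s > 0\<close> \<open>b - s < 0\<close> by (simp add: divide_neg_pos mult_pos_neg)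
  finally show False using assms[of "- a / s"] by simp
qed

lemma matrix_vector_eq_0_if_psd_quadratic_form_eq_0:
  assumes sym: "symmetric_mat B" and psd: "\<And>x. 0 \<le> x \<bullet> (B *v x)" and "u \<bullet> (B *v u) = 0"
  shows "B *v u = 0"
proof -
  define w where "w = B *v u"
  have "0 \<le> (2 * (w \<bullet> w)) * t + (w \<bullet> (B *v w)) * t\<^sup>2" for t
  proof -
    have "u \<bullet> (B *v w) = w \<bullet> w"
      using inner_matrix_vector_symmetric[OF sym] by (simp add: w_def)
    then have "(u + t *\<^sub>R w) \<bullet> (B *v (u + t *\<^sub>R w)) = (2 * (w \<bullet> w)) * t + (w \<bullet> (B *v w)) * t\<^sup>2"
      using \<open>u \<bullet> (B *v u) = 0\<close>
      by (simp add: matrix_vector_right_distrib matrix_vector_mult_scaleR inner_add inner_commute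
          w_def algebra_simps power2_eq_square)
    then show ?thesis using psd by metis
  qed
  then have "2 * (w \<bullet> w) = 0" by (rule linear_coeff_eq_0_if_nonneg_quadratic)
  then show ?thesis by (simp add: w_def)
qed

lemma quadratic_form_scaleR:
  fixes A :: "real^'n^'n"
  shows "(c *\<^sub>R x) \<bullet> (A *v (c *\<^sub>R x)) = c\<^sup>2 * (x \<bullet> (A *v x))"
  by (simp add: matrix_vector_mult_scaleR power2_eq_square)

lemma symmetric_matrix_max_eigenvector:
  assumes sym: "symmetric_mat A"
  obtains u l where "u \<noteq> 0" "A *v u = l *\<^sub>R u" "\<And>x. x \<bullet> (A *v x) \<le> l * (x \<bullet> x)"
proof -
  have "sphere (0::real^'n) 1 \<noteq> {}" by simp
  moreover have "continuous_on (sphere 0 1) (\<lambda>x. x \<bullet> (A *v x))"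
    by (intro continuous_intros linear_continuous_on matrix_vector_mul_linear)
  ultimately obtain u where u: "u \<in> sphere 0 1"
    and umax: "\<And>y. y \<in> sphere 0 1 \<Longrightarrow> y \<bullet> (A *v y) \<le> u \<bullet> (A *v u)"
    using continuous_attains_sup[OF compact_sphere] by blast
  define l where "l = u \<bullet> (A *v u)"
  have bound: "x \<bullet> (A *v x) \<le> l * (x \<bullet> x)" for x
  proof (cases "x = 0")
    case False
    have "(1 / norm x) *\<^sub>R x \<in> sphere 0 1" using False by simp
    from umax[OF this] have "(1 / norm x)\<^sup>2 * (x \<bullet> (A *v x)) \<le> l"
      unfolding quadratic_form_scaleR l_def .
    then have "x \<bullet> (A *v x) / (norm x)\<^sup>2 \<le> l" by (simp add: power_divide)
    then show ?thesis using False by (simp add: divide_le_eq dot_square_norm)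
  qed simp
  define B where "B = l *\<^sub>R mat 1 - A"
  have B: "B *v x = l *\<^sub>R x - A *v x" for x
    by (simp add: B_def matrix_vector_mult_diff_rdistrib flip: scaleR_matrix_vector_assoc)
  have "symmetric_mat B"
    using sym by (simp add: symmetric_mat_def B_def transpose_def vec_eq_iff mat_def)
  moreover have "0 \<le> x \<bullet> (B *v x)" for x
    using bound[of x] by (simp add: B inner_diff_right)
  moreover have "u \<bullet> (B *v u) = 0"
    using u by (simp add: B inner_diff_right l_def dot_square_norm)
  ultimately have "B *v u = 0" by (rule matrix_vector_eq_0_if_psd_quadratic_form_eq_0)
  show ?thesis
  proof (rule that)
    show "u \<noteq> 0" using u by auto
    show "A *v u = l *\<^sub>R u" using \<open>B *v u = 0\<close> by (simp add: B)
  qed (rule bound)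
qed

lemma finite_eigenvalues_symmetric:
  assumes sym: "symmetric_mat A"
  shows "finite (eigenvalues A)"
proof -
  define e where "e l = (SOME x. x \<noteq> 0 \<and> A *v x = l *\<^sub>R x)" for l
  have e: "e l \<noteq> 0 \<and> A *v e l = l *\<^sub>R e l" if "l \<in> eigenvalues A" for l
  proof -
    have "\<exists>x. x \<noteq> 0 \<and> A *v x = l *\<^sub>R x" using that unfolding eigenvalues_def by simp
    then show ?thesis unfolding e_def by (rule someI_ex)
  qed
  have "inj_on e (eigenvalues A)"
  proof (rule inj_onI)
    fix l1 l2 assume "l1 \<in> eigenvalues A" "l2 \<in> eigenvalues A" "e l1 = e l2"
    then have "l1 *\<^sub>R e l1 = l2 *\<^sub>R e l1" "e l1 \<noteq> 0" using e by metis+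
    then show "l1 = l2" by simp
  qed
  moreover have "pairwise orthogonal (e ` eigenvalues A)"
  proof (clarsimp simp: pairwise_def orthogonal_def)
    fix l1 l2 assume l: "l1 \<in> eigenvalues A" "l2 \<in> eigenvalues A" "e l1 \<noteq> e l2"
    have "l1 * (e l1 \<bullet> e l2) = e l2 \<bullet> (A *v e l1)" using e[OF l(1)] by (simp add: inner_commute)
    also have "\<dots> = e l1 \<bullet> (A *v e l2)" by (rule inner_matrix_vector_symmetric[OF sym])
    also have "\<dots> = l2 * (e l1 \<bullet> e l2)" using e[OF l(2)] by simp
    finally show "e l1 \<bullet> e l2 = 0" using l by auto
  qed
  moreover have "0 \<notin> e ` eigenvalues A" using e by auto
  ultimately show ?thesis
    using pairwise_orthogonal_independent finiteI_independent finite_imageD by blast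
qed

lemma lambda_max_Rayleigh:
  assumes sym: "symmetric_mat A"
  obtains u where "u \<noteq> 0" "u \<bullet> (A *v u) = lambda_max A * (u \<bullet> u)"
    and "\<And>x. x \<bullet> (A *v x) \<le> lambda_max A * (x \<bullet> x)"
proof -
  obtain u l where u: "u \<noteq> 0" "A *v u = l *\<^sub>R u" and bound: "\<And>x. x \<bullet> (A *v x) \<le> l * (x \<bullet> x)"
    using symmetric_matrix_max_eigenvector[OF sym] by blast
  have "k \<le> l" if k: "k \<in> eigenvalues A" for k
  proof -
    obtain y where y: "y \<noteq> 0" "A *v y = k *\<^sub>R y" using k unfolding eigenvalues_def by auto
    then have "k * (y \<bullet> y) \<le> l * (y \<bullet> y)" using bound[of y] by simp
    then show ?thesis using y by simp
  qed
  moreover have "l \<in> eigenvalues A" using u unfolding eigenvalues_def by auto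
  ultimately have "lambda_max A = l"
    unfolding lambda_max_def using finite_eigenvalues_symmetric[OF sym] by (intro Max_eqI) auto
  then show ?thesis using that u bound by simp
qed

lemma convex_on_lambda_max:
  fixes M :: "'a::real_vector \<Rightarrow> real^'n^'n"
  assumes S: "convex S" and sym: "\<And>z. z \<in> S \<Longrightarrow> symmetric_mat (M z)"
    and quad: "\<And>x. convex_on S (\<lambda>z. x \<bullet> (M z *v x))"
  shows "convex_on S (\<lambda>z. lambda_max (M z))"
proof (rule convex_onI[OF _ S])
  fix t :: real and z1 z2 assume t: "0 < t" "t < 1" and z: "z1 \<in> S" "z2 \<in> S"
  define z where "z = (1 - t) *\<^sub>R z1 + t *\<^sub>R z2"
  have "z \<in> S" using convexD_alt[OF S z] t by (simp add: z_def)
  then obtain u where "u \<noteq> 0" and u: "u \<bullet> (M z *v u) = lambda_max (M z) * (u \<bullet> u)"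
    using lambda_max_Rayleigh sym by metis
  have "lambda_max (M z) * (u \<bullet> u) = u \<bullet> (M z *v u)" by (rule u[symmetric])
  also have "\<dots> \<le> (1 - t) * (u \<bullet> (M z1 *v u)) + t * (u \<bullet> (M z2 *v u))"
    unfolding z_def using convex_onD[OF quad, of t z1 z2] t z by simp
  also have "\<dots> \<le> (1 - t) * (lambda_max (M z1) * (u \<bullet> u)) + t * (lambda_max (M z2) * (u \<bullet> u))"
    using t lambda_max_Rayleigh[OF sym[OF z(1)]] lambda_max_Rayleigh[OF sym[OF z(2)]]
    by (intro add_mono mult_left_mono) auto
  also have "\<dots> = ((1 - t) * lambda_max (M z1) + t * lambda_max (M z2)) * (u \<bullet> u)"
    by (simp add: algebra_simps)
  finally show "lambda_max (M z) \<le> (1 - t) * lambda_max (M z1) + t * lambda_max (M z2)"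
    using \<open>u \<noteq> 0\<close> by (simp add: mult_le_cancel_right)
qed

lemma convex_on_linear:
  fixes f :: "'a::real_vector \<Rightarrow> real"
  assumes "linear f" "convex S"
  shows "convex_on S f"
  using assms by (simp add: convex_on_def linear_add linear_scale)

lemma convex_on_linear_comp:
  assumes f: "convex_on T f" and "linear g" "convex S" "g ` S \<subseteq> T"
  shows "convex_on S (\<lambda>x. f (g x))"
proof (rule convex_onI[OF _ \<open>convex S\<close>])
  fix t :: real and x y assume "0 < t" "t < 1" "x \<in> S" "y \<in> S"
  then show "f (g ((1 - t) *\<^sub>R x + t *\<^sub>R y)) \<le> (1 - t) * f (g x) + t * f (g y)"
    using convex_onD[OF f, of t "g x" "g y"] assms by (auto simp: linear_add linear_scale)
qed

lemma power2_div_convex_combination: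
  fixes c1 c2 y1 y2 t :: real
  assumes "0 < y1" "0 < y2" "0 \<le> t" "t \<le> 1"
  shows "((1 - t) * c1 + t * c2)\<^sup>2 / ((1 - t) * y1 + t * y2) \<le> (1 - t) * (c1\<^sup>2 / y1) + t * (c2\<^sup>2 / y2)"
proof -
  have y: "(1 - t) * y1 + t * y2 > 0"
    using assms by (smt (verit) mult_nonneg_nonneg mult_pos_pos)
  have "(1 - t) * (c1\<^sup>2 / y1) + t * (c2\<^sup>2 / y2) - ((1 - t) * c1 + t * c2)\<^sup>2 / ((1 - t) * y1 + t * y2)
      = t * (1 - t) * (c1 * y2 - c2 * y1)\<^sup>2 / (y1 * y2 * ((1 - t) * y1 + t * y2))"
    using assms y by (simp add: field_simps) (simp add: algebra_simps power2_eq_square)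
  also have "\<dots> \<ge> 0" using assms y by (intro divide_nonneg_pos mult_nonneg_nonneg) auto
  finally show ?thesis by simp
qed

text \<open>The quadratic form of the inverse of the correlation matrix \<open>[[1, r], [r, 1]]\<close>.\<close>

definition inv_corr_form :: "real \<Rightarrow> real \<Rightarrow> real \<Rightarrow> real" where
  "inv_corr_form r a b = (a\<^sup>2 - 2 * r * a * b + b\<^sup>2) / (1 - r\<^sup>2)"

lemma inv_corr_form_eq:
  assumes "-1 < r" "r < 1"
  shows "inv_corr_form r a b = (a + b)\<^sup>2 / (2 * (1 + r)) + (a - b)\<^sup>2 / (2 * (1 - r))"
proof -
  have "1 + r > 0" "1 - r > 0" using assms by auto
  moreover have "1 - r\<^sup>2 = (1 + r) * (1 - r)" by (simp add: algebra_simps power2_eq_square)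
  ultimately show ?thesis
    unfolding inv_corr_form_def
    by (simp add: field_split_simps) (simp add: algebra_simps power2_eq_square)
qed

lemma convex_on_inv_corr_form:
  "convex_on ({-1<..<1} \<times> UNIV) (\<lambda>(r, a, b). inv_corr_form r a b)"
proof (rule convex_onI)
  show "convex ({-1<..<1 :: real} \<times> (UNIV :: (real \<times> real) set))"
    by (intro convex_Times convex_UNIV) simp
next
  fix t :: real and x y :: "real \<times> real \<times> real"
  assume t: "0 < t" "t < 1" and "x \<in> {-1<..<1} \<times> UNIV" "y \<in> {-1<..<1} \<times> UNIV"
  then obtain r1 a1 b1 r2 a2 b2 where xy: "x = (r1, a1, b1)" "y = (r2, a2, b2)"
    and r: "-1 < r1" "r1 < 1" "-1 < r2" "r2 < 1"
    by (cases x, cases y) auto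
  define r where "r = (1 - t) * r1 + t * r2"
  have "r \<in> {-1<..<1}"
    using convexD_alt[of "{-1<..<1}" r1 r2 t] r t by (simp add: r_def)
  have "((1 - t) * (a1 + b1) + t * (a2 + b2))\<^sup>2 / ((1 - t) * (2 * (1 + r1)) + t * (2 * (1 + r2)))
      \<le> (1 - t) * ((a1 + b1)\<^sup>2 / (2 * (1 + r1))) + t * ((a2 + b2)\<^sup>2 / (2 * (1 + r2)))"
   and "((1 - t) * (a1 - b1) + t * (a2 - b2))\<^sup>2 / ((1 - t) * (2 * (1 - r1)) + t * (2 * (1 - r2)))
      \<le> (1 - t) * ((a1 - b1)\<^sup>2 / (2 * (1 - r1))) + t * ((a2 - b2)\<^sup>2 / (2 * (1 - r2)))"
    using r t by (intro power2_div_convex_combination; simp)+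
  then show "(\<lambda>(r, a, b). inv_corr_form r a b) ((1 - t) *\<^sub>R x + t *\<^sub>R y)
      \<le> (1 - t) * (\<lambda>(r, a, b). inv_corr_form r a b) x + t * (\<lambda>(r, a, b). inv_corr_form r a b) y"
    using r \<open>r \<in> {-1<..<1}\<close> unfolding xy r_def
    by (simp add: inv_corr_form_eq algebra_simps add_divide_distrib)
qed

lemma subspace_symmetric_trace_free: "subspace {s. symmetric_mat s \<and> trace_free s}"
  by (auto simp: subspace_def symmetric_mat_def trace_free_def transpose_def vec_eq_iff
      sum.distrib simp flip: sum_distrib_left)

lemma Z0_eq: "Z0 = {-1<..<1} \<times> UNIV \<times> UNIV \<times> {s. symmetric_mat s \<and> trace_free s} \<times> UNIV"
  by (auto simp: Z0_def)

lemma convex_Z0: "convex Z0"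
  unfolding Z0_eq
  by (intro convex_Times convex_UNIV subspace_imp_convex[OF subspace_symmetric_trace_free]) simp

lemma symmetric_Mmat:
  assumes "symmetric_mat s"
  shows "symmetric_mat (Mmat (r, v, m, s, p))"
proof -
  have "s $ j $ i = s $ i $ j" for i j
    using assms unfolding symmetric_mat_def by (metis transpose_def vec_lambda_beta)
  then show ?thesis
    by (simp add: symmetric_mat_def Mmat_def transpose_def outer_def vec_eq_iff algebra_simps)
qed

lemma outer_matrix_vector: "outer v w *v x = (w \<bullet> x) *\<^sub>R v"
  by (simp add: outer_def matrix_vector_mult_def vec_eq_iff inner_vec_def sum_distrib_left algebra_simps)

lemma quadratic_form_Mmat:
  "x \<bullet> (Mmat (r, v, m, s, p) *v x) = inv_corr_form r (v \<bullet> x) (m \<bullet> x) - x \<bullet> (s *v x)"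
  by (simp add: Mmat_def inv_corr_form_def matrix_vector_mult_add_rdistrib matrix_vector_mult_diff_rdistrib
      outer_matrix_vector inner_commute power2_eq_square algebra_simps add_divide_distrib
      diff_divide_distrib flip: scaleR_matrix_vector_assoc)

lemma convex_on_quadratic_form_Mmat:
  "convex_on (Z0 :: ('n::finite) zspace set) (\<lambda>z. x \<bullet> (Mmat z *v x))"
proof -
  let ?g = "(\<lambda>(r, v, m, s, p). (r, v \<bullet> x, m \<bullet> x)) :: 'n zspace \<Rightarrow> real \<times> real \<times> real"
  let ?h = "(\<lambda>(r, v, m, s, p). - (x \<bullet> (s *v x))) :: 'n zspace \<Rightarrow> real"
  have "linear ?g"
    by (simp add: linear_iff case_prod_beta inner_add_left)
  moreover have "linear ?h"
    by (simp add: linear_iff case_prod_beta matrix_vector_mult_add_rdistrib inner_add_right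
        flip: scaleR_matrix_vector_assoc)
  moreover have "?g ` Z0 \<subseteq> {-1<..<1} \<times> UNIV"
    by (auto simp: Z0_def)
  moreover have "x \<bullet> (Mmat z *v x) = (\<lambda>(r, a, b). inv_corr_form r a b) (?g z) + ?h z" for z
    by (cases z) (simp add: quadratic_form_Mmat)
  ultimately show ?thesis
    using convex_on_add[OF convex_on_linear_comp[OF convex_on_inv_corr_form] convex_on_linear]
      convex_Z0 by simp
qed

theorem lemma3p7:
  assumes "CARD('n::finite) \<ge> 2"
  shows "convex_on (Z0 :: 'n zspace set) Qfun"
  unfolding Qfun_def
proof (rule convex_on_lambda_max[OF convex_Z0])
  show "symmetric_mat (Mmat z)" if "z \<in> Z0" for z
    using that symmetric_Mmat by (auto simp: Z0_def)
qed (rule convex_on_quadratic_form_Mmat)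

end
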